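(* Let $C$ be a finite set of constraints over propositional variables $x\in\{\pm1\}^n$ and real variables $y\in\mathbb{R}^m$, let $F=\bigwedge_{c\in C}c$, and let $w_c>0$ be a weight for each $c\in C$. Let $\mathcal{F}_w(a,b)=\sum_{c\in C}w_c\, f_c(a,b)$ for $(a,b)\in[-1,1]^n\times\mathbb{R}^m$, where $f_c(a,b)$ is the multilinear extension (in the propositional variables) of the extended Walsh–Fourier expansion of $c$, as defined in the context. Then $F$ is satisfiable if and only if $$\min_{a\in[-1,1]^n,\ b\in\mathbb{R}^m}\mathcal{F}_w(a,b)=-\sum_{c\in C}w_c .$$
   Context: Truth values are encoded as $-1$ = True and $+1$ = False. There are $k$ atoms $\alpha_1,\dots,\alpha_k$; each atom is a linear (in)equality $\alpha_i:\ \sum_{j=1}^m q_{i,j}y_j-q_{i,0}\bowtie_i 0$ with $\bowtie_i\in\{=,<,\le,>,\ge\}$ and real coefficients $q_{i,j}$. Its indicator is $\delta_i(y)=-1$ if $\alpha_i$ holds at $y$ and $\delta_i(y)=1$ otherwise; write $\delta(y)=(\delta_1(y),\dots,\delta_k(y))$. Each constraint $c\in C$ is a Boolean combination of the propositional variables and atoms, represented as $f_c:\{\pm1\}^n\times\mathbb{R}^m\to\{\pm1\}$ with $f_c(x,y)=-1$ iff $c$ is true at $(x,y)$; thus $f_c(x,y)=\tilde f_c(x,\delta(y))$ for a Boolean function $\tilde f_c:\{\pm1\}^{n+k}\to\{\pm1\}$. For $S\subseteq[n]$, $T\subseteq[k]$ put $\hat f_c(S,T)=\mathbb{E}_{(x,z)\sim\{\pm1\}^{n+k}\text{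 uniform}}\big[\tilde f_c(x,z)\prod_{i\in S}x_i\prod_{i\in T}z_i\big]$, so that $f_c(x,y)=\sum_{S\subseteq[n],T\subseteq[k]}\hat f_c(S,T)\prod_{i\in S}x_i\prod_{i\in T}\delta_i(y)$ (the extended Walsh–Fourier expansion). This formula is used to define $f_c(a,b)$ for all $a\in[-1,1]^n$, $b\in\mathbb{R}^m$ by replacing $x_i$ with $a_i$ and $y$ with $b$. $F$ is satisfiable iff there exist $x\in\{\pm1\}^n$, $y\in\mathbb{R}^m$ with $f_c(x,y)=-1$ for all $c\in C$. *)

theory Defs
  imports Complex_Main "HOL-Library.FuncSet"
begin

text \<open>Truth values: -1 = True, +1 = False.\<close>

datatype cmp = CEq | CLt | CLe | CGt | CGe

fun cmp_holds :: "cmp \<Rightarrow> real \<Rightarrow> bool" where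
  "cmp_holds CEq t = (t = 0)"
| "cmp_holds CLt t = (t < 0)"
| "cmp_holds CLe t = (t \<le> 0)"
| "cmp_holds CGt t = (t > 0)"
| "cmp_holds CGe t = (t \<ge> 0)"

definition pm_cube :: "nat \<Rightarrow> (nat \<Rightarrow> real) set" where
  "pm_cube n = ({..<n} \<rightarrow>\<^sub>E {-1, 1})"

definition atom_holds ::
  "nat \<Rightarrow> (nat \<Rightarrow> nat \<Rightarrow> real) \<Rightarrow> (nat \<Rightarrow> cmp) \<Rightarrow> nat \<Rightarrow> (nat \<Rightarrow> real) \<Rightarrow> bool" where
  "atom_holds m q rel i y = cmp_holds (rel i) ((\<Sum>j=1..m. q i j * y j) - q i 0)"

definition delta ::
  "nat \<Rightarrow> (nat \<Rightarrow> nat \<Rightarrow> real) \<Rightarrow> (nat \<Rightarrow> cmp) \<Rightarrow> nat \<Rightarrow> (nat \<Rightarrow> real) \<Rightarrow> real" where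
  "delta m q rel i y = (if atom_holds m q rel i y then -1 else 1)"

definition delta_vec ::
  "nat \<Rightarrow> nat \<Rightarrow> (nat \<Rightarrow> nat \<Rightarrow> real) \<Rightarrow> (nat \<Rightarrow> cmp) \<Rightarrow> (nat \<Rightarrow> real) \<Rightarrow> (nat \<Rightarrow> real)" where
  "delta_vec m k q rel y = restrict (\<lambda>i. delta m q rel i y) {..<k}"

definition walsh_coeff ::
  "nat \<Rightarrow> nat \<Rightarrow> ((nat \<Rightarrow> real) \<Rightarrow> (nat \<Rightarrow> real) \<Rightarrow> real) \<Rightarrow> nat set \<Rightarrow> nat set \<Rightarrow> real" where
  "walsh_coeff n k g S T =
     (\<Sum>x\<in>pm_cube n. \<Sum>z\<in>pm_cube k. g x z * (\<Prod>i\<in>S. x i) * (\<Prod>i\<in>T. z i)) / 2 ^ (n + k)"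

definition walsh_ext ::
  "nat \<Rightarrow> nat \<Rightarrow> nat \<Rightarrow> (nat \<Rightarrow> nat \<Rightarrow> real) \<Rightarrow> (nat \<Rightarrow> cmp) \<Rightarrow>
   ((nat \<Rightarrow> real) \<Rightarrow> (nat \<Rightarrow> real) \<Rightarrow> real) \<Rightarrow> (nat \<Rightarrow> real) \<Rightarrow> (nat \<Rightarrow> real) \<Rightarrow> real" where
  "walsh_ext n m k q rel g a b =
     (\<Sum>S\<in>Pow {..<n}. \<Sum>T\<in>Pow {..<k}.
        walsh_coeff n k g S T * (\<Prod>i\<in>S. a i) * (\<Prod>i\<in>T. delta m q rel i b))"

definition weighted_obj ::
  "nat \<Rightarrow> nat \<Rightarrow> nat \<Rightarrow> (nat \<Rightarrow> nat \<Rightarrow> real) \<Rightarrow> (nat \<Rightarrow> cmp) \<Rightarrow> 'c set \<Rightarrow>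
   ('c \<Rightarrow> (nat \<Rightarrow> real) \<Rightarrow> (nat \<Rightarrow> real) \<Rightarrow> real) \<Rightarrow> ('c \<Rightarrow> real) \<Rightarrow>
   (nat \<Rightarrow> real) \<Rightarrow> (nat \<Rightarrow> real) \<Rightarrow> real" where
  "weighted_obj n m k q rel C f w a b = (\<Sum>c\<in>C. w c * walsh_ext n m k q rel (f c) a b)"

definition satisfiable ::
  "nat \<Rightarrow> nat \<Rightarrow> nat \<Rightarrow> (nat \<Rightarrow> nat \<Rightarrow> real) \<Rightarrow> (nat \<Rightarrow> cmp) \<Rightarrow> 'c set \<Rightarrow>
   ('c \<Rightarrow> (nat \<Rightarrow> real) \<Rightarrow> (nat \<Rightarrow> real) \<Rightarrow> real) \<Rightarrow> bool" where
  "satisfiable n m k q rel C f =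
     (\<exists>x\<in>pm_cube n. \<exists>y::nat \<Rightarrow> real. \<forall>c\<in>C. f c x (delta_vec m k q rel y) = -1)"

definition unit_box :: "nat \<Rightarrow> (nat \<Rightarrow> real) set" where
  "unit_box n = {a. \<forall>i<n. -1 \<le> a i \<and> a i \<le> 1}"

end

theory Submission
  imports Defs
begin

text \<open>
  Expanding the Walsh coefficients and summing the monomials over all subsets turns
  \<open>f\<^sub>c(a, b)\<close> into \<open>\<Sum>\<^sub>x \<Prod>\<^sub>i (1 + a\<^sub>i x\<^sub>i)/2 \<cdot> f\<^sub>c(x, \<delta>(b))\<close>:
  the expectation of the \<open>\<plusminus>1\<close>-valued function \<open>f\<^sub>c(\<cdot>, \<delta>(b))\<close> under the
  product distribution on \<open>{\<plusminus>1}\<^sup>n\<close> with means \<open>a\<close>. Hence every \<open>f\<^sub>c\<close> is at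
  least \<open>-1\<close> on the box and agrees with the constraint at the vertices, so
  \<open>F\<^sub>w \<ge> -\<Sum> w\<^sub>c\<close> with equality at any solution. Conversely, if
  \<open>F\<^sub>w(a, b) = -\<Sum> w\<^sub>c\<close> then each \<open>f\<^sub>c(a, b) = -1\<close>, so
  \<open>f\<^sub>c(x, \<delta>(b)) = -1\<close> for every \<open>x\<close> in the support of the distribution,
  which contains the vertex obtained by rounding \<open>a\<close> to signs.
\<close>

definition cube_weight :: "nat \<Rightarrow> (nat \<Rightarrow> real) \<Rightarrow> (nat \<Rightarrow> real) \<Rightarrow> real" where
  "cube_weight n a x = (\<Prod>i<n. (1 + a i * x i) / 2)"

definition sign_vertex :: "nat \<Rightarrow> (nat \<Rightarrow> real) \<Rightarrow> nat \<Rightarrow> real" where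
  "sign_vertex n a = (\<lambda>i\<in>{..<n}. if 0 \<le> a i then 1 else -1)"

lemma finite_pm_cube: "finite (pm_cube n)"
  unfolding pm_cube_def by (intro finite_PiE) auto

lemma pm_cube_values: "x \<in> pm_cube n \<Longrightarrow> i < n \<Longrightarrow> x i = -1 \<or> x i = 1"
  unfolding pm_cube_def by (auto simp: PiE_iff)

lemma pm_cube_subset_unit_box: "pm_cube n \<subseteq> unit_box n"
  unfolding unit_box_def by (force dest: pm_cube_values)

lemma delta_vec_in_pm_cube: "delta_vec m k q rel y \<in> pm_cube k"
  unfolding delta_vec_def pm_cube_def delta_def by auto

lemma sign_vertex_in_pm_cube: "sign_vertex n a \<in> pm_cube n"
  unfolding sign_vertex_def pm_cube_def by auto

lemma cube_weight_nonneg: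
  assumes "a \<in> unit_box n" "x \<in> pm_cube n"
  shows "0 \<le> cube_weight n a x"
  unfolding cube_weight_def
proof (rule prod_nonneg)
  fix i assume "i \<in> {..<n}"
  then have "-1 \<le> a i" "a i \<le> 1" "x i = -1 \<or> x i = 1"
    using assms pm_cube_values unfolding unit_box_def by auto
  then show "0 \<le> (1 + a i * x i) / 2" by auto
qed

lemma sum_cube_weight: "(\<Sum>x\<in>pm_cube n. cube_weight n a x) = 1"
proof -
  have "(\<Sum>x\<in>pm_cube n. cube_weight n a x) = (\<Prod>i<n. \<Sum>v\<in>{-1, 1}. (1 + a i * v) / 2)"
    unfolding cube_weight_def pm_cube_def by (rule prod_sum_PiE[symmetric]) auto
  also have "\<dots> = 1" by (simp add: field_simps)
  finally show ?thesis .
qed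

lemma cube_weight_vertex:
  assumes "a \<in> pm_cube n" "x \<in> pm_cube n"
  shows "cube_weight n a x = (if x = a then 1 else 0)"
proof (cases "x = a")
  case True
  then show ?thesis
    unfolding cube_weight_def using assms(2) by (auto dest: pm_cube_values intro!: prod.neutral)
next
  case False
  then obtain i where i: "x i \<noteq> a i" by auto
  with assms have "i < n" unfolding pm_cube_def by (metis PiE_arb lessThan_iff)
  moreover have "a i = -1 \<or> a i = 1" "x i = -1 \<or> x i = 1"
    using assms \<open>i < n\<close> pm_cube_values by blast+
  ultimately have "(1 + a i * x i) / 2 = 0" using i by auto
  with \<open>i < n\<close> \<open>x \<noteq> a\<close> show ?thesis
    unfolding cube_weight_def by (auto intro: prod_zero)
qed

lemma sum_cube_weight_vertex:
  assumes "a \<in> pm_cube n"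
  shows "(\<Sum>x\<in>pm_cube n. cube_weight n a x * h x) = h a"
  using assms
  by (simp add: cube_weight_vertex finite_pm_cube if_distrib[of "\<lambda>t. t * _"] cong: if_cong)

lemma cube_weight_sign_vertex_pos: "0 < cube_weight n a (sign_vertex n a)"
  unfolding cube_weight_def sign_vertex_def by (rule prod_pos) auto

lemma sum_Pow_monomials_eq_cube_weight:
  "(\<Sum>S\<in>Pow {..<n}. \<Prod>i\<in>S. x i * a i) / 2 ^ n = cube_weight n a x"
proof -
  have "(\<Sum>S\<in>Pow {..<n}. \<Prod>i\<in>S. x i * a i) = (\<Prod>i<n. x i * a i + 1)"
    using prod_add[of "{..<n}" "\<lambda>i. x i * a i" "\<lambda>_. 1"] by simp
  then show ?thesis
    unfolding cube_weight_def prod_dividef by (simp add: algebra_simps)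
qed

lemma walsh_ext_eq_expectation:
  "walsh_ext n m k q rel g a b =
     (\<Sum>x\<in>pm_cube n. cube_weight n a x * g x (delta_vec m k q rel b))"
proof -
  define d where "d = delta_vec m k q rel b"
  have d_cube: "d \<in> pm_cube k"
    unfolding d_def by (rule delta_vec_in_pm_cube)
  have "walsh_ext n m k q rel g a b =
     (\<Sum>S\<in>Pow {..<n}. \<Sum>T\<in>Pow {..<k}. \<Sum>x\<in>pm_cube n. \<Sum>z\<in>pm_cube k.
        g x z * ((\<Prod>i\<in>S. x i * a i) / 2 ^ n) * ((\<Prod>i\<in>T. z i * d i) / 2 ^ k))"
    unfolding walsh_ext_def
  proof (intro sum.cong refl)
    fix S T assume "T \<in> Pow {..<k}"
    then have delta_prod: "(\<Prod>i\<in>T. delta m q rel i b) = (\<Prod>i\<in>T. d i)"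
      unfolding d_def delta_vec_def by (intro prod.cong) auto
    show "walsh_coeff n k g S T * (\<Prod>i\<in>S. a i) * (\<Prod>i\<in>T. delta m q rel i b) =
      (\<Sum>x\<in>pm_cube n. \<Sum>z\<in>pm_cube k.
        g x z * ((\<Prod>i\<in>S. x i * a i) / 2 ^ n) * ((\<Prod>i\<in>T. z i * d i) / 2 ^ k))"
      unfolding walsh_coeff_def delta_prod sum_divide_distrib sum_distrib_right
      by (intro sum.cong refl) (simp add: prod.distrib power_add field_simps)
  qed
  also have "\<dots> = (\<Sum>x\<in>pm_cube n. \<Sum>z\<in>pm_cube k. \<Sum>S\<in>Pow {..<n}. \<Sum>T\<in>Pow {..<k}.
        g x z * ((\<Prod>i\<in>S. x i * a i) / 2 ^ n) * ((\<Prod>i\<in>T. z i * d i) / 2 ^ k))"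
    unfolding sum.swap[of _ "Pow {..<k}" "pm_cube n"] sum.swap[of _ "Pow {..<n}" "pm_cube n"]
      sum.swap[of _ "Pow {..<k}" "pm_cube k"] sum.swap[of _ "Pow {..<n}" "pm_cube k"] ..
  also have "\<dots> = (\<Sum>x\<in>pm_cube n. \<Sum>z\<in>pm_cube k. g x z * cube_weight n a x * cube_weight k d z)"
  proof (intro sum.cong refl)
    fix x z
    have "(\<Sum>S\<in>Pow {..<n}. \<Sum>T\<in>Pow {..<k}.
        g x z * ((\<Prod>i\<in>S. x i * a i) / 2 ^ n) * ((\<Prod>i\<in>T. z i * d i) / 2 ^ k)) =
      g x z * ((\<Sum>S\<in>Pow {..<n}. (\<Prod>i\<in>S. x i * a i) / 2 ^ n) *
        (\<Sum>T\<in>Pow {..<k}. (\<Prod>i\<in>T. z i * d i) / 2 ^ k))"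
      unfolding sum_product by (simp only: sum_distrib_left mult.assoc)
    also have "\<dots> = g x z * cube_weight n a x * cube_weight k d z"
      by (simp only: sum_divide_distrib[symmetric] sum_Pow_monomials_eq_cube_weight mult.assoc)
    finally show "(\<Sum>S\<in>Pow {..<n}. \<Sum>T\<in>Pow {..<k}.
        g x z * ((\<Prod>i\<in>S. x i * a i) / 2 ^ n) * ((\<Prod>i\<in>T. z i * d i) / 2 ^ k)) =
      g x z * cube_weight n a x * cube_weight k d z" .
  qed
  also have "\<dots> = (\<Sum>x\<in>pm_cube n. cube_weight n a x * (\<Sum>z\<in>pm_cube k. cube_weight k d z * g x z))"
    by (simp add: sum_distrib_left mult_ac)
  also have "\<dots> = (\<Sum>x\<in>pm_cube n. cube_weight n a x * g x d)"
    using d_cube by (simp add: sum_cube_weight_vertex)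
  finally show ?thesis
    unfolding d_def .
qed

lemma walsh_ext_vertex:
  "x \<in> pm_cube n \<Longrightarrow> walsh_ext n m k q rel g x b = g x (delta_vec m k q rel b)"
  by (simp add: walsh_ext_eq_expectation sum_cube_weight_vertex)

lemma sum_weighted_ge_lower_bound:
  fixes p v :: "'a \<Rightarrow> real"
  assumes "\<forall>x\<in>A. 0 \<le> p x" "\<forall>x\<in>A. l \<le> v x"
  shows "l * sum p A \<le> (\<Sum>x\<in>A. p x * v x)"
  unfolding sum_distrib_left
proof (rule sum_mono)
  fix x assume "x \<in> A"
  with assms have "l * p x \<le> v x * p x"
    by (intro mult_right_mono) auto
  then show "l * p x \<le> p x * v x"
    by (simp only: mult.commute)
qed

lemma sum_weighted_eq_lower_bound:
  fixes p v :: "'a \<Rightarrow> real"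
  assumes "finite A" "\<forall>x\<in>A. 0 \<le> p x" "\<forall>x\<in>A. l \<le> v x"
    and "(\<Sum>x\<in>A. p x * v x) = l * sum p A"
    and "x \<in> A" "0 < p x"
  shows "v x = l"
proof -
  have "(\<Sum>y\<in>A. p y * (v y - l)) = (\<Sum>y\<in>A. p y * v y) - l * sum p A"
    by (simp add: right_diff_distrib sum_subtractf sum_distrib_left mult_ac)
  also have "\<dots> = 0"
    using assms(4) by simp
  finally have sum0: "(\<Sum>y\<in>A. p y * (v y - l)) = 0" .
  have nonneg: "0 \<le> p y * (v y - l)" if "y \<in> A" for y
    using assms(2,3) that by simp
  have "p x * (v x - l) = 0"
    by (rule sum_nonneg_0[OF assms(1) nonneg sum0 assms(5)])
  with assms(6) show ?thesis
    by simp
qed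

lemma walsh_ext_ge_lower_bound:
  assumes "a \<in> unit_box n" "\<forall>x\<in>pm_cube n. \<forall>z\<in>pm_cube k. l \<le> g x z"
  shows "l \<le> walsh_ext n m k q rel g a b"
proof -
  have "l * (\<Sum>x\<in>pm_cube n. cube_weight n a x) \<le> walsh_ext n m k q rel g a b"
    unfolding walsh_ext_eq_expectation using assms delta_vec_in_pm_cube cube_weight_nonneg
    by (intro sum_weighted_ge_lower_bound) auto
  then show ?thesis
    by (simp add: sum_cube_weight)
qed

lemma walsh_ext_eq_lower_bound_at_sign_vertex:
  assumes "a \<in> unit_box n" "\<forall>x\<in>pm_cube n. \<forall>z\<in>pm_cube k. l \<le> g x z"
    and "walsh_ext n m k q rel g a b = l"
  shows "g (sign_vertex n a) (delta_vec m k q rel b) = l"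
proof (rule sum_weighted_eq_lower_bound
    [where p = "cube_weight n a" and v = "\<lambda>x. g x (delta_vec m k q rel b)"])
  show "(\<Sum>x\<in>pm_cube n. cube_weight n a x * g x (delta_vec m k q rel b)) =
      l * (\<Sum>x\<in>pm_cube n. cube_weight n a x)"
    using assms(3) by (simp add: walsh_ext_eq_expectation sum_cube_weight)
qed (use assms delta_vec_in_pm_cube cube_weight_nonneg in
      \<open>auto simp: finite_pm_cube sign_vertex_in_pm_cube cube_weight_sign_vertex_pos\<close>)

lemma weighted_obj_ge:
  assumes "a \<in> unit_box n" "\<forall>c\<in>C. 0 \<le> w c"
    and "\<forall>c\<in>C. \<forall>x\<in>pm_cube n. \<forall>z\<in>pm_cube k. -1 \<le> f c x z"
  shows "- (\<Sum>c\<in>C. w c) \<le> weighted_obj n m k q rel C f w a b"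
proof -
  have "-1 * (\<Sum>c\<in>C. w c) \<le> weighted_obj n m k q rel C f w a b"
    unfolding weighted_obj_def using assms walsh_ext_ge_lower_bound
    by (intro sum_weighted_ge_lower_bound) auto
  then show ?thesis by simp
qed

lemma weighted_obj_min_imp_walsh_ext_eq:
  assumes "finite C" "a \<in> unit_box n" "\<forall>c\<in>C. 0 < w c"
    and "\<forall>c\<in>C. \<forall>x\<in>pm_cube n. \<forall>z\<in>pm_cube k. -1 \<le> f c x z"
    and "weighted_obj n m k q rel C f w a b = - (\<Sum>c\<in>C. w c)"
    and "c \<in> C"
  shows "walsh_ext n m k q rel (f c) a b = -1"
proof (rule sum_weighted_eq_lower_bound
    [where p = w and v = "\<lambda>c. walsh_ext n m k q rel (f c) a b"])
  show "(\<Sum>c\<in>C. w c * walsh_ext n m k q rel (f c) a b) = -1 * sum w C"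
    using assms(5) unfolding weighted_obj_def by simp
qed (use assms walsh_ext_ge_lower_bound in \<open>auto simp: less_imp_le\<close>)

theorem theorem1:
  fixes n m k :: nat
    and q :: "nat \<Rightarrow> nat \<Rightarrow> real"
    and rel :: "nat \<Rightarrow> cmp"
    and C :: "'c set"
    and f :: "'c \<Rightarrow> (nat \<Rightarrow> real) \<Rightarrow> (nat \<Rightarrow> real) \<Rightarrow> real"
    and w :: "'c \<Rightarrow> real"
  assumes "finite C"
    and "\<forall>c\<in>C. \<forall>x\<in>pm_cube n. \<forall>z\<in>pm_cube k. f c x z \<in> {-1, 1}"
    and "\<forall>c\<in>C. w c > 0"
  shows "satisfiable n m k q rel C f \<longleftrightarrow>
    (\<exists>a\<in>unit_box n. \<exists>b::nat \<Rightarrow> real.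
       weighted_obj n m k q rel C f w a b = - (\<Sum>c\<in>C. w c) \<and>
       (\<forall>a'\<in>unit_box n. \<forall>b'::nat \<Rightarrow> real.
          weighted_obj n m k q rel C f w a b \<le> weighted_obj n m k q rel C f w a' b'))"
    (is "_ \<longleftrightarrow> ?attains_min")
proof -
  have bound: "\<forall>c\<in>C. \<forall>x\<in>pm_cube n. \<forall>z\<in>pm_cube k. -1 \<le> f c x z"
    using assms(2) by fastforce
  have lower: "- (\<Sum>c\<in>C. w c) \<le> weighted_obj n m k q rel C f w a b" if "a \<in> unit_box n" for a b
    using weighted_obj_ge[OF that _ bound] assms(3) by (simp add: less_imp_le)
  show ?thesis
  proof
    assume "satisfiable n m k q rel C f"
    then obtain x y where x: "x \<in> pm_cube n" and sol: "\<forall>c\<in>C. f c x (delta_vec m k q rel y) = -1"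
      unfolding satisfiable_def by blast
    have "weighted_obj n m k q rel C f w x y = - (\<Sum>c\<in>C. w c)"
      unfolding weighted_obj_def using x sol by (simp add: walsh_ext_vertex sum_negf)
    moreover have "x \<in> unit_box n"
      using x pm_cube_subset_unit_box by blast
    ultimately show ?attains_min
      using lower by force
  next
    assume ?attains_min
    then obtain a b where a: "a \<in> unit_box n"
      and min: "weighted_obj n m k q rel C f w a b = - (\<Sum>c\<in>C. w c)" by blast
    have "f c (sign_vertex n a) (delta_vec m k q rel b) = -1" if "c \<in> C" for c
      using that bound
      by (intro walsh_ext_eq_lower_bound_at_sign_vertex[OF a]
          weighted_obj_min_imp_walsh_ext_eq[OF assms(1) a assms(3) bound min]) auto
    then show "satisfiable n m k q rel C f"
      unfolding satisfiable_def using sign_vertex_in_pm_cube by blast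
  qed
qed

end
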